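(* Let $p>1$ and let $\varphi$ be an analytic self-map of $\mathbb{D}$ with $\varphi\in S^p$. Then $D_\varphi:S^p\to S^p$ is compact if and only if $\|\varphi\|_\infty=\sup_{z\in\mathbb{D}}|\varphi(z)|<1$.
   Context: $\mathbb{D}$ is the open unit disk. For $p>1$, $H^p$ is the Hardy space on $\mathbb{D}$ with norm $\|g\|_{H^p}^p=\sup_{0<r<1}\int_0^{2\pi}|g(re^{i\theta})|^p\frac{d\theta}{2\pi}$; $S^p$ is the space of analytic $f$ on $\mathbb{D}$ with $f'\in H^p$, normed by $\|f\|_{S^p}=|f(0)|+\|f'\|_{H^p}$. $D_\varphi f=f'\circ\varphi$. *)

theory Defs
  imports "HOL-Analysis.Analysis"
begin

definition integral_mean :: "real \<Rightarrow> (complex \<Rightarrow> complex) \<Rightarrow> real \<Rightarrow> real" where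
  "integral_mean p g r =
     integral {0..2*pi} (\<lambda>t. cmod (g (complex_of_real r * cis t)) powr p) / (2*pi)"

definition in_Hp :: "real \<Rightarrow> (complex \<Rightarrow> complex) \<Rightarrow> bool" where
  "in_Hp p g \<longleftrightarrow> g holomorphic_on ball 0 1 \<and>
     bdd_above ((integral_mean p g) ` {0<..<1})"

definition Hp_norm :: "real \<Rightarrow> (complex \<Rightarrow> complex) \<Rightarrow> real" where
  "Hp_norm p g = (SUP r\<in>{0<..<1}. integral_mean p g r) powr (1/p)"

definition in_Sp :: "real \<Rightarrow> (complex \<Rightarrow> complex) \<Rightarrow> bool" where
  "in_Sp p f \<longleftrightarrow> f holomorphic_on ball 0 1 \<and> in_Hp p (deriv f)"

definition Sp_norm :: "real \<Rightarrow> (complex \<Rightarrow> complex) \<Rightarrow> real" where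
  "Sp_norm p f = cmod (f 0) + Hp_norm p (deriv f)"

definition D_op :: "(complex \<Rightarrow> complex) \<Rightarrow> (complex \<Rightarrow> complex) \<Rightarrow> (complex \<Rightarrow> complex)" where
  "D_op \<phi> f = deriv f \<circ> \<phi>"

text \<open>A (not necessarily linear-checked) map T is a compact operator S^p -> S^p:
  it maps S^p into S^p, and the image of every norm-bounded sequence has a
  subsequence converging in S^p norm to an element of S^p.\<close>
definition compact_on_Sp :: "real \<Rightarrow> ((complex \<Rightarrow> complex) \<Rightarrow> (complex \<Rightarrow> complex)) \<Rightarrow> bool" where
  "compact_on_Sp p T \<longleftrightarrow>
     (\<forall>f. in_Sp p f \<longrightarrow> in_Sp p (T f)) \<and>
     (\<forall>F :: nat \<Rightarrow> complex \<Rightarrow> complex.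
        (\<forall>n. in_Sp p (F n)) \<and> bdd_above ((\<lambda>n. Sp_norm p (F n)) ` UNIV) \<longrightarrow>
        (\<exists>r g. strict_mono r \<and> in_Sp p g \<and>
           (\<lambda>n. Sp_norm p (\<lambda>z. T (F (r n)) z - g z)) \<longlonglongrightarrow> 0))"

end

theory Submission
  imports Defs "HOL-Complex_Analysis.Complex_Analysis"
begin

text \<open>For \<open>p \<ge> 1\<close>, every \<open>f \<in> S\<^sup>p\<close> is bounded on the disk with
  \<open>|f w| \<le> 8\<pi> \<parallel>f\<parallel>\<^sub>S\<^sub>p\<close>: the oscillation of \<open>f\<close> on the circle \<open>|z| = \<rho>\<close> is at most the
  \<open>L\<^sup>1\<close>-mean of \<open>f'\<close> there, which is controlled by its \<open>L\<^sup>p\<close>-mean, and the maximum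
  modulus principle carries this to the centre.

  If \<open>D\<^sub>\<phi>\<close> is compact, the images \<open>\<phi>\<^sup>n\<close> of the bounded monomials \<open>z\<^sup>n\<^sup>+\<^sup>1/(n+1)\<close> have a
  subsequence converging in \<open>S\<^sup>p\<close>, hence uniformly, and the limit must be \<open>0\<close>; so
  \<open>sup |\<phi>|\<^sup>k < 1/2\<close> for some \<open>k\<close>.  Conversely, if \<open>|\<phi>| \<le> s < 1\<close>, a bounded sequence in
  \<open>S\<^sup>p\<close> is uniformly bounded, Montel's theorem gives a subsequence converging uniformly on
  a disk of radius \<open>> s\<close>, and Cauchy's estimates for the first two derivatives on that disk,
  together with \<open>(f' \<circ> \<phi>)' = (f'' \<circ> \<phi>) \<phi>'\<close> and \<open>\<phi>' \<in> H\<^sup>p\<close>, give convergence in \<open>S\<^sup>p\<close>.\<close>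

lemma le_add_powr_scaled:
  fixes x e p :: real
  assumes "0 \<le> x" "0 < e" "1 \<le> p"
  shows "x \<le> e + e powr (1 - p) * x powr p"
proof (cases "x \<le> e")
  case True
  then show ?thesis using assms by (smt (verit) mult_nonneg_nonneg powr_ge_zero)
next
  case False
  then have x: "x > 0" using assms by simp
  have "1 \<le> (x/e) powr (p - 1)" using False assms by (intro ge_one_powr_ge_zero) auto
  then have "x \<le> x * (x/e) powr (p - 1)" using x by simp
  also have "x * (x/e) powr (p - 1) = e powr (1 - p) * x powr p"
  proof -
    have "x * (x/e) powr (p - 1) = (x powr 1 * x powr (p - 1)) / e powr (p - 1)"
      using x assms by (simp add: powr_divide)
    also have "x powr 1 * x powr (p - 1) = x powr p" using x by (simp add: powr_mult_base)
    also have "e powr (1 - p) = 1 / e powr (p - 1)" using assms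
      by (metis minus_diff_eq powr_minus_divide)
    ultimately show ?thesis by simp
  qed
  finally show ?thesis using assms by (smt (verit) powr_ge_zero)
qed

lemma powr_le_if_le_add:
  fixes u x y p :: real
  assumes "0 \<le> u" "0 \<le> x" "0 \<le> y" "u \<le> x + y" "0 < p"
  shows "u powr p \<le> 2 powr p * x powr p + 2 powr p * y powr p"
proof -
  have "u \<le> 2 * max x y" using assms by linarith
  then have "u powr p \<le> (2 * max x y) powr p" using assms by (intro powr_mono2) auto
  also have "\<dots> = 2 powr p * max x y powr p" using assms by (simp add: powr_mult)
  also have "\<dots> \<le> 2 powr p * x powr p + 2 powr p * y powr p"
    by (cases "x \<le> y") (auto simp: max_def)
  finally show ?thesis .
qed

section \<open>Integral means\<close>

lemma continuous_on_circle:
  assumes "continuous_on (ball 0 1) h" "0 \<le> r" "r < 1"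
  shows "continuous_on S (\<lambda>t. h (complex_of_real r * cis t))"
proof (rule continuous_on_compose2[OF assms(1)])
  show "continuous_on S (\<lambda>t. complex_of_real r * cis t)" by (intro continuous_intros)
  show "(\<lambda>t. complex_of_real r * cis t) ` S \<subseteq> ball 0 1" using assms by (auto simp: norm_mult)
qed

lemma integrable_on_circle_norm_powr:
  assumes "continuous_on (ball 0 1) h" "0 \<le> r" "r < 1" "0 < p"
  shows "(\<lambda>t. cmod (h (complex_of_real r * cis t)) powr p) integrable_on {a..b}"
  using assms by (intro integrable_continuous_interval continuous_on_powr')
    (auto intro!: continuous_intros continuous_on_circle)

lemma integrable_on_circle_norm:
  assumes "continuous_on (ball 0 1) h" "0 \<le> r" "r < 1"
  shows "(\<lambda>t. cmod (h (complex_of_real r * cis t))) integrable_on {a..b}"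
  using assms by (intro integrable_continuous_interval) (auto intro!: continuous_intros continuous_on_circle)

lemma integral_mean_nonneg: "0 \<le> integral_mean p h r"
  unfolding integral_mean_def
  by (cases "(\<lambda>t. cmod (h (complex_of_real r * cis t)) powr p) integrable_on {0..2*pi}")
     (auto intro!: integral_nonneg divide_nonneg_pos simp: not_integrable_integral)

lemma integral_mean_le_lincomb:
  assumes "continuous_on (ball 0 1) h" "continuous_on (ball 0 1) f" "continuous_on (ball 0 1) g"
    "0 \<le> r" "r < 1" "0 < p"
    and le: "\<And>z. z \<in> ball 0 1 \<Longrightarrow> cmod (h z) powr p \<le> a * cmod (f z) powr p + b * cmod (g z) powr p"
  shows "integral_mean p h r \<le> a * integral_mean p f r + b * integral_mean p g r"
proof -
  let ?m = "\<lambda>h t. cmod (h (complex_of_real r * cis t)) powr p"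
  have int: "?m k integrable_on {0..2*pi}" if "continuous_on (ball 0 1) k" for k
    using integrable_on_circle_norm_powr[OF that assms(4-6)] .
  have "integral {0..2*pi} (?m h) \<le> integral {0..2*pi} (\<lambda>t. a * ?m f t + b * ?m g t)"
  proof (rule integral_le[OF int[OF assms(1)]])
    show "(\<lambda>t. a * ?m f t + b * ?m g t) integrable_on {0..2*pi}"
      using integrable_add[OF integrable_on_mult_right[OF int[OF assms(2)], of a]
          integrable_on_mult_right[OF int[OF assms(3)], of b]] by simp
  qed (use assms(4,5) le in \<open>simp add: norm_mult\<close>)
  also have "\<dots> = a * integral {0..2*pi} (?m f) + b * integral {0..2*pi} (?m g)"
    using int[OF assms(2)] int[OF assms(3)] by (simp add: integral_add integrable_on_mult_right)
  finally have "integral {0..2*pi} (?m h) / (2*pi)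
      \<le> (a * integral {0..2*pi} (?m f) + b * integral {0..2*pi} (?m g)) / (2*pi)"
    by (intro divide_right_mono) auto
  then show ?thesis unfolding integral_mean_def by (simp add: add_divide_distrib)
qed

section \<open>Hardy space norms\<close>

lemma Hp_norm_nonneg: "0 \<le> Hp_norm p g"
  by (simp add: Hp_norm_def)

lemma integral_mean_le_Hp_norm_powr:
  assumes "in_Hp p g" "0 < p" "r \<in> {0<..<1}"
  shows "integral_mean p g r \<le> Hp_norm p g powr p"
proof -
  let ?S = "SUP r\<in>{0<..<1}. integral_mean p g r"
  have le: "integral_mean p g r \<le> ?S"
    using assms(1,3) by (intro cSUP_upper) (auto simp: in_Hp_def)
  then have "0 \<le> ?S" using integral_mean_nonneg order_trans by blast
  then have "Hp_norm p g powr p = ?S" unfolding Hp_norm_def using assms(2) by (simp add: powr_powr)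
  then show ?thesis using le by simp
qed

lemma Hp_norm_le:
  assumes "0 < p" "\<And>r. r \<in> {0<..<1} \<Longrightarrow> integral_mean p g r \<le> M"
  shows "Hp_norm p g \<le> M powr (1/p)"
proof -
  let ?S = "SUP r\<in>{0<..<1}. integral_mean p g r"
  have bdd: "bdd_above ((integral_mean p g) ` {0<..<1})"
    using assms(2) by (intro bdd_aboveI2[where M=M]) auto
  have "integral_mean p g (1/2) \<le> ?S" by (rule cSUP_upper[OF _ bdd]) auto
  then have "0 \<le> ?S" using integral_mean_nonneg order_trans by blast
  moreover have "?S \<le> M" using assms(2) by (intro cSUP_least) auto
  ultimately show ?thesis unfolding Hp_norm_def using assms(1) by (intro powr_mono2) auto
qed

lemma in_Hp_diff:
  assumes "in_Hp p f" "in_Hp p g" "0 < p"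
  shows "in_Hp p (\<lambda>z. f z - g z)"
proof -
  have hol: "f holomorphic_on ball 0 1" "g holomorphic_on ball 0 1"
    using assms by (auto simp: in_Hp_def)
  then have cont: "continuous_on (ball 0 1) f" "continuous_on (ball 0 1) g"
    using holomorphic_on_imp_continuous_on by auto
  define M where "M = 2 powr p * Hp_norm p f powr p + 2 powr p * Hp_norm p g powr p"
  have "integral_mean p (\<lambda>z. f z - g z) r \<le> M" if r: "r \<in> {0<..<1}" for r
  proof -
    have "integral_mean p (\<lambda>z. f z - g z) r
            \<le> 2 powr p * integral_mean p f r + 2 powr p * integral_mean p g r"
      using cont r assms(3)
      by (intro integral_mean_le_lincomb powr_le_if_le_add continuous_intros)
        (auto simp: norm_triangle_ineq4)
    also have "\<dots> \<le> M" unfolding M_def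
      using integral_mean_le_Hp_norm_powr[OF assms(1,3) r] integral_mean_le_Hp_norm_powr[OF assms(2,3) r]
      by (intro add_mono mult_left_mono) auto
    finally show ?thesis .
  qed
  then show ?thesis using hol unfolding in_Hp_def
    by (auto intro!: holomorphic_intros bdd_aboveI2[where M=M])
qed

lemma in_Hp_cong:
  assumes "in_Hp p f" "g holomorphic_on ball 0 1" "\<And>z. z \<in> ball 0 1 \<Longrightarrow> f z = g z"
  shows "in_Hp p g"
proof -
  have "integral_mean p f r = integral_mean p g r" if "r \<in> {0<..<1}" for r
    unfolding integral_mean_def using assms(3) that by (auto intro!: integral_cong simp: norm_mult)
  then have "(integral_mean p f) ` {0<..<1} = (integral_mean p g) ` {0<..<1}" by auto
  then show ?thesis using assms(1,2) unfolding in_Hp_def by auto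
qed

lemma in_Hp_dominated:
  assumes "f holomorphic_on ball 0 1" "in_Hp p g" "0 < p" "0 \<le> c"
    and le: "\<And>z. z \<in> ball 0 1 \<Longrightarrow> cmod (f z) \<le> c * cmod (g z)"
  shows "in_Hp p f" "Hp_norm p f \<le> c * Hp_norm p g"
proof -
  have cont: "continuous_on (ball 0 1) f" "continuous_on (ball 0 1) g"
    using assms holomorphic_on_imp_continuous_on by (auto simp: in_Hp_def)
  have pow: "cmod (f z) powr p \<le> c powr p * cmod (g z) powr p + 0 * cmod (g z) powr p"
    if "z \<in> ball 0 1" for z
    using le[OF that] assms(3,4) by (simp add: powr_mult[symmetric] powr_mono2)
  have M: "integral_mean p f r \<le> (c * Hp_norm p g) powr p" if r: "r \<in> {0<..<1}" for r
  proof -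
    have "integral_mean p f r \<le> c powr p * integral_mean p g r + 0 * integral_mean p g r"
      using r assms(3) by (intro integral_mean_le_lincomb[OF cont(1,2,2)] pow) auto
    also have "\<dots> \<le> c powr p * Hp_norm p g powr p"
      using integral_mean_le_Hp_norm_powr[OF assms(2,3) r] by (simp add: mult_left_mono)
    also have "\<dots> = (c * Hp_norm p g) powr p" using assms(4) by (simp add: powr_mult Hp_norm_nonneg)
    finally show ?thesis .
  qed
  then show "in_Hp p f" using assms(1) unfolding in_Hp_def
    by (auto intro!: bdd_aboveI2[where M="(c * Hp_norm p g) powr p"])
  have "Hp_norm p f \<le> ((c * Hp_norm p g) powr p) powr (1/p)" by (rule Hp_norm_le[OF assms(3) M])
  also have "\<dots> = c * Hp_norm p g" using assms(3,4) by (simp add: powr_powr Hp_norm_nonneg)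
  finally show "Hp_norm p f \<le> c * Hp_norm p g" .
qed

section \<open>Boundedness of functions in \<open>S\<^sup>p\<close>\<close>

lemma norm_diff_on_circle_arc_le:
  assumes "f holomorphic_on ball 0 1" "0 < \<rho>" "\<rho> < 1" "0 \<le> s" "s \<le> 2*pi"
  shows "cmod (f (complex_of_real \<rho> * cis s) - f (complex_of_real \<rho>))
          \<le> integral {0..2*pi} (\<lambda>u. cmod (deriv f (complex_of_real \<rho> * cis u)))"
proof -
  let ?c = "\<lambda>u. complex_of_real \<rho> * cis u"
  let ?f' = "\<lambda>u. (complex_of_real \<rho> * (\<i> * cis u)) * deriv f (?c u)"
  have c: "?c u \<in> ball 0 1" for u using assms by (simp add: norm_mult)
  have df: "(f has_field_derivative deriv f (?c u)) (at (?c u))" for u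
    using c[of u] assms(1)
    by (meson DERIV_deriv_iff_field_differentiable holomorphic_on_imp_differentiable_at open_ball)
  have dc: "(?c has_vector_derivative (complex_of_real \<rho> * (\<i> * cis u))) (at u)" for u
    using has_derivative_cis[OF has_derivative_ident[of "at u"]]
    by (intro has_vector_derivative_mult_right) (simp add: has_vector_derivative_def)
  have "(?f' has_integral ((f \<circ> ?c) s - (f \<circ> ?c) 0)) {0..s}"
  proof (rule fundamental_theorem_of_calculus)
    show "\<And>u. u \<in> {0..s} \<Longrightarrow> ((f \<circ> ?c) has_vector_derivative ?f' u) (at u within {0..s})"
      by (rule has_vector_derivative_at_within[OF field_vector_diff_chain_at[OF dc df]])
  qed (use assms in simp)
  then have eq: "f (?c s) - f (complex_of_real \<rho>) = integral {0..s} ?f'"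
    by (simp add: integral_unique)
  have cont: "continuous_on (ball 0 1) (deriv f)"
    by (intro holomorphic_on_imp_continuous_on holomorphic_deriv assms(1)) auto
  have int: "(\<lambda>u. cmod (deriv f (?c u))) integrable_on {a..b}" for a b
    using assms by (intro integrable_on_circle_norm[OF cont]) auto
  have "continuous_on {0..s} (\<lambda>u. deriv f (?c u))"
    using assms by (intro continuous_on_circle[OF cont]) auto
  then have "?f' integrable_on {0..s}"
    by (intro integrable_continuous_interval continuous_intros)
  then have "cmod (integral {0..s} ?f') \<le> integral {0..s} (\<lambda>u. cmod (deriv f (?c u)))"
    using assms by (intro integral_norm_bound_integral int) (simp_all add: norm_mult mult_left_le_one_le)
  also have "\<dots> \<le> integral {0..2*pi} (\<lambda>u. cmod (deriv f (?c u)))"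
    using assms int by (intro integral_subset_le) auto
  finally show ?thesis using eq by simp
qed

lemma norm_diff_on_circle_le:
  assumes "f holomorphic_on ball 0 1" "0 < \<rho>" "\<rho> < 1" "cmod w = \<rho>"
  shows "cmod (f w - f (complex_of_real \<rho>))
          \<le> integral {0..2*pi} (\<lambda>u. cmod (deriv f (complex_of_real \<rho> * cis u)))"
proof -
  have "0 \<le> Arg2pi w" "Arg2pi w < 2*pi" "w = complex_of_real \<rho> * cis (Arg2pi w)"
    using Arg2pi[of w] assms(4) by (auto simp: is_Arg_def cis_conv_exp)
  then show ?thesis using norm_diff_on_circle_arc_le[OF assms(1-3), of "Arg2pi w"] by simp
qed

lemma norm_diff_centre_le:
  assumes "f holomorphic_on ball 0 1" "0 < \<rho>" "\<rho> < 1"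
  shows "cmod (f 0 - f (complex_of_real \<rho>))
          \<le> integral {0..2*pi} (\<lambda>u. cmod (deriv f (complex_of_real \<rho> * cis u)))"
proof (rule maximum_modulus_frontier[where f="\<lambda>z. f z - f (complex_of_real \<rho>)" and S="cball 0 \<rho>"])
  have sub: "cball 0 \<rho> \<subseteq> ball 0 1" using assms by auto
  show "(\<lambda>z. f z - f (complex_of_real \<rho>)) holomorphic_on interior (cball 0 \<rho>)"
    using sub by (intro holomorphic_intros holomorphic_on_subset[OF assms(1)]) auto
  show "continuous_on (closure (cball 0 \<rho>)) (\<lambda>z. f z - f (complex_of_real \<rho>))"
    by (intro holomorphic_on_imp_continuous_on holomorphic_intros holomorphic_on_subset[OF assms(1)])
      (use sub in auto)
  show "bounded (cball 0 \<rho>)" "0 \<in> cball 0 \<rho>" using assms by auto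
  fix z :: complex assume "z \<in> frontier (cball 0 \<rho>)"
  then have "cmod z = \<rho>" using assms by simp
  then show "cmod (f z - f (complex_of_real \<rho>))
      \<le> integral {0..2*pi} (\<lambda>u. cmod (deriv f (complex_of_real \<rho> * cis u)))"
    by (rule norm_diff_on_circle_le[OF assms])
qed

lemma circle_integral_norm_le:
  assumes "f holomorphic_on ball 0 1" "0 < \<rho>" "\<rho> < 1" "1 \<le> p" "0 < e"
  shows "integral {0..2*pi} (\<lambda>u. cmod (f (complex_of_real \<rho> * cis u)))
     \<le> 2*pi * (e + e powr (1 - p) * integral_mean p f \<rho>)"
proof -
  let ?g = "\<lambda>u. cmod (f (complex_of_real \<rho> * cis u))"
  have cont: "continuous_on (ball 0 1) f" using assms(1) holomorphic_on_imp_continuous_on by auto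
  have int: "?g integrable_on {0..2*pi}" "(\<lambda>u. ?g u powr p) integrable_on {0..2*pi}"
    using assms by (auto intro!: integrable_on_circle_norm integrable_on_circle_norm_powr cont)
  have "integral {0..2*pi} ?g \<le> integral {0..2*pi} (\<lambda>u. e + e powr (1 - p) * ?g u powr p)"
  proof (rule integral_le[OF int(1)])
    show "(\<lambda>u. e + e powr (1 - p) * ?g u powr p) integrable_on {0..2*pi}"
      using integrable_add[OF integrable_const_ivl[of e 0 "2*pi"]
          integrable_on_mult_right[OF int(2), of "e powr (1 - p)"]] by simp
  qed (use assms le_add_powr_scaled in auto)
  also have "\<dots> = 2*pi*e + e powr (1 - p) * integral {0..2*pi} (\<lambda>u. ?g u powr p)"
    by (subst integral_add[OF integrable_const_ivl integrable_on_mult_right[OF int(2)]]) simp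
  also have "\<dots> = 2*pi * (e + e powr (1 - p) * integral_mean p f \<rho>)"
    unfolding integral_mean_def by (simp add: algebra_simps)
  finally show ?thesis .
qed

lemma norm_diff_le_Hp_norm_deriv:
  assumes "f holomorphic_on ball 0 1" "in_Hp p (deriv f)" "1 \<le> p" "w \<in> ball 0 1"
  shows "cmod (f w - f 0) \<le> 8*pi * Hp_norm p (deriv f)"
proof (cases "w = 0")
  case True then show ?thesis by (simp add: Hp_norm_nonneg)
next
  case False
  define \<rho> where "\<rho> = cmod w"
  have \<rho>: "0 < \<rho>" "\<rho> < 1" using False assms(4) by (auto simp: \<rho>_def)
  define N where "N = Hp_norm p (deriv f)"
  have N: "0 \<le> N" by (simp add: N_def Hp_norm_nonneg)
  have mean: "integral_mean p (deriv f) \<rho> \<le> N powr p"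
    unfolding N_def using \<rho> assms by (intro integral_mean_le_Hp_norm_powr) auto
  show ?thesis
  proof (rule field_le_epsilon)
    fix \<delta> :: real assume "0 < \<delta>"
    define e where "e = N + \<delta> / (8*pi)"
    have e: "0 < e" "N \<le> e" using N \<open>0 < \<delta>\<close> by (auto simp: e_def intro: add_nonneg_pos)
    \<comment> \<open>choosing \<open>e \<ge> N\<close> in \<open>x \<le> e + e\<^sup>1\<^sup>-\<^sup>p x\<^sup>p\<close> makes the \<open>L\<^sup>1\<close>-mean of \<open>f'\<close> at most \<open>2e\<close>\<close>
    have "e powr (1 - p) * integral_mean p (deriv f) \<rho> \<le> e powr (1 - p) * N powr p"
      using mean by (simp add: mult_left_mono)
    also have "\<dots> \<le> e powr (1 - p) * e powr p"
      using e N assms(3) by (intro mult_left_mono powr_mono2) auto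
    also have "\<dots> = e" using e by (simp add: powr_add[symmetric])
    finally have E: "e powr (1 - p) * integral_mean p (deriv f) \<rho> \<le> e" .
    have "integral {0..2*pi} (\<lambda>u. cmod (deriv f (complex_of_real \<rho> * cis u)))
        \<le> 2*pi * (e + e powr (1 - p) * integral_mean p (deriv f) \<rho>)"
      by (rule circle_integral_norm_le[OF holomorphic_deriv[OF assms(1) open_ball] \<rho> assms(3) e(1)])
    also have "\<dots> \<le> 2*pi * (e + e)" using E by (intro mult_left_mono add_left_mono) auto
    finally have "integral {0..2*pi} (\<lambda>u. cmod (deriv f (complex_of_real \<rho> * cis u))) \<le> 4*pi*e"
      by simp
    moreover have "cmod (f w - f 0)
        \<le> cmod (f w - f (complex_of_real \<rho>)) + cmod (f 0 - f (complex_of_real \<rho>))"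
      using norm_triangle_ineq4[of "f w - f (complex_of_real \<rho>)" "f 0 - f (complex_of_real \<rho>)"] by simp
    ultimately have "cmod (f w - f 0) \<le> 8*pi*e"
      using norm_diff_on_circle_le[OF assms(1) \<rho>, of w] norm_diff_centre_le[OF assms(1) \<rho>]
      by (simp add: \<rho>_def)
    also have "\<dots> = 8*pi * N + \<delta>" by (simp add: e_def distrib_left)
    finally show "cmod (f w - f 0) \<le> 8*pi * Hp_norm p (deriv f) + \<delta>" by (simp add: N_def)
  qed
qed

lemma Sp_norm_nonneg: "0 \<le> Sp_norm p f"
  by (simp add: Sp_norm_def Hp_norm_nonneg)

lemma norm_le_Sp_norm:
  assumes "in_Sp p f" "1 \<le> p" "w \<in> ball 0 1"
  shows "cmod (f w) \<le> 8*pi * Sp_norm p f"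
proof -
  have "cmod (f w) \<le> cmod (f 0) + cmod (f w - f 0)" by (metis norm_triangle_sub add.commute)
  also have "\<dots> \<le> cmod (f 0) + 8*pi * Hp_norm p (deriv f)"
    using assms norm_diff_le_Hp_norm_deriv by (auto simp: in_Sp_def)
  also have "\<dots> \<le> 8*pi * Sp_norm p f"
    using pi_gt3 by (simp add: Sp_norm_def distrib_left mult_le_cancel_right1)
  finally show ?thesis .
qed

lemma in_Sp_diff:
  assumes "in_Sp p f" "in_Sp p g" "0 < p"
  shows "in_Sp p (\<lambda>z. f z - g z)"
proof -
  have hol: "f holomorphic_on ball 0 1" "g holomorphic_on ball 0 1"
    using assms by (auto simp: in_Sp_def)
  have "in_Hp p (deriv (\<lambda>z. f z - g z))"
  proof (rule in_Hp_cong)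
    show "in_Hp p (\<lambda>z. deriv f z - deriv g z)" using assms in_Hp_diff by (auto simp: in_Sp_def)
    show "deriv (\<lambda>z. f z - g z) holomorphic_on ball 0 1"
      using hol by (intro holomorphic_deriv holomorphic_intros) auto
    show "deriv f z - deriv g z = deriv (\<lambda>z. f z - g z) z" if "z \<in> ball 0 1" for z
      by (rule deriv_diff[symmetric]; rule holomorphic_on_imp_differentiable_at[OF _ open_ball that])
        (use hol in auto)
  qed
  then show ?thesis using hol by (auto simp: in_Sp_def intro!: holomorphic_intros)
qed

lemma uniform_limit_if_Sp_norm_tendsto:
  assumes "1 \<le> p" "\<And>n. in_Sp p (F n)" "in_Sp p g"
    and lim: "(\<lambda>n. Sp_norm p (\<lambda>z. F n z - g z)) \<longlonglongrightarrow> 0"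
  shows "uniform_limit (ball 0 1) F g sequentially"
  unfolding uniform_limit_iff
proof (intro allI impI)
  fix e :: real assume "0 < e"
  then have "eventually (\<lambda>n. Sp_norm p (\<lambda>z. F n z - g z) < e / (8*pi)) sequentially"
    using lim by (intro order_tendstoD(2)) auto
  then show "eventually (\<lambda>n. \<forall>w\<in>ball 0 1. dist (F n w) (g w) < e) sequentially"
  proof (rule eventually_mono, intro ballI)
    fix n and w :: complex
    assume "Sp_norm p (\<lambda>z. F n z - g z) < e / (8*pi)" "w \<in> ball 0 1"
    moreover have "cmod (F n w - g w) \<le> 8*pi * Sp_norm p (\<lambda>z. F n z - g z)"
      using assms \<open>w \<in> ball 0 1\<close> by (intro norm_le_Sp_norm[where f="\<lambda>z. F n z - g z", simplified]
          in_Sp_diff) auto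
    ultimately show "dist (F n w) (g w) < e" by (simp add: dist_norm field_simps)
  qed
qed

lemma deriv_monomial_div: "deriv (\<lambda>z::complex. z ^ Suc n / of_nat (Suc n)) = (\<lambda>z. z ^ n)"
proof
  fix z :: complex
  have "((\<lambda>z::complex. z ^ Suc n) has_field_derivative (of_nat (Suc n) * z ^ n)) (at z)"
    using DERIV_power_Suc[OF DERIV_ident, of n z] by (simp add: add.commute)
  from DERIV_cdivide[OF this, of "of_nat (Suc n)"]
  have "((\<lambda>z::complex. z ^ Suc n / of_nat (Suc n)) has_field_derivative z ^ n) (at z)"
    by (simp del: of_nat_Suc)
  then show "deriv (\<lambda>z::complex. z ^ Suc n / of_nat (Suc n)) z = z ^ n"
    by (rule DERIV_imp_deriv)
qed

lemma monomial_div_in_Sp: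
  assumes "0 < p"
  shows "in_Sp p (\<lambda>z::complex. z ^ Suc n / of_nat (Suc n))"
    and "Sp_norm p (\<lambda>z::complex. z ^ Suc n / of_nat (Suc n)) \<le> 1"
proof -
  have mean: "integral_mean p (\<lambda>z. z ^ n) r \<le> 1" if r: "r \<in> {0<..<1}" for r
  proof -
    have "integral_mean p (\<lambda>z. z ^ n) r \<le> 1 * integral_mean p (\<lambda>z. 1) r + 0 * integral_mean p (\<lambda>z. 1) r"
      using r assms by (intro integral_mean_le_lincomb continuous_intros)
        (auto simp: norm_power intro!: powr_le1 power_le_one)
    also have "\<dots> = 1" by (simp add: integral_mean_def)
    finally show ?thesis .
  qed
  then have "in_Hp p (\<lambda>z. z ^ n)"
    unfolding in_Hp_def by (auto intro!: holomorphic_intros bdd_aboveI2[where M=1])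
  then show "in_Sp p (\<lambda>z::complex. z ^ Suc n / of_nat (Suc n))"
    unfolding in_Sp_def deriv_monomial_div by (auto intro!: holomorphic_intros)
  have "Hp_norm p (\<lambda>z. z ^ n) \<le> 1 powr (1/p)" using mean assms by (intro Hp_norm_le) auto
  then show "Sp_norm p (\<lambda>z::complex. z ^ Suc n / of_nat (Suc n)) \<le> 1"
    unfolding Sp_norm_def deriv_monomial_div by simp
qed

section \<open>The operator \<open>D\<^sub>\<phi>\<close>\<close>

lemma deriv_deriv_compose:
  assumes "f holomorphic_on ball 0 1" "\<phi> holomorphic_on ball 0 1" "\<phi> ` ball 0 1 \<subseteq> ball 0 1"
    "z \<in> ball 0 1"
  shows "deriv (\<lambda>z. deriv f (\<phi> z)) z = deriv (deriv f) (\<phi> z) * deriv \<phi> z"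
proof (rule deriv_compose_analytic)
  have "deriv f analytic_on ball 0 1" using assms(1) by (simp add: analytic_on_open holomorphic_deriv)
  moreover have "\<phi> z \<in> ball 0 1" using assms(3,4) by (auto simp: image_subset_iff)
  ultimately show "deriv f analytic_on {\<phi> z}" by (auto intro: analytic_on_subset)
  have "\<phi> analytic_on ball 0 1" using assms(2) by (simp add: analytic_on_open)
  then show "\<phi> analytic_on {z}" using assms(4) by (auto intro: analytic_on_subset)
qed

lemma in_Sp_D_op:
  assumes "0 < p" "\<phi> holomorphic_on ball 0 1" "\<phi> ` ball 0 1 \<subseteq> ball 0 1" "in_Hp p (deriv \<phi>)"
    and s: "s < 1" "\<And>z. z \<in> ball 0 1 \<Longrightarrow> cmod (\<phi> z) \<le> s"
    and f: "f holomorphic_on ball 0 1"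
  shows "in_Sp p (D_op \<phi> f)"
proof -
  have eq: "D_op \<phi> f = (\<lambda>z. deriv f (\<phi> z))" by (simp add: D_op_def o_def)
  have hol: "(\<lambda>z. deriv f (\<phi> z)) holomorphic_on ball 0 1"
    using assms by (intro holomorphic_deriv_compose[OF f]) auto
  have sub: "cball 0 (max s 0) \<subseteq> ball 0 1" using s by auto
  have "compact (deriv (deriv f) ` cball 0 (max s 0))"
    by (intro compact_continuous_image holomorphic_on_imp_continuous_on holomorphic_on_subset[OF _ sub]
        holomorphic_deriv f) auto
  then obtain K where "K > 0" "\<And>x. x \<in> deriv (deriv f) ` cball 0 (max s 0) \<Longrightarrow> cmod x \<le> K"
    using compact_imp_bounded bounded_pos by metis
  then have K: "K > 0" "\<And>w. w \<in> cball 0 (max s 0) \<Longrightarrow> cmod (deriv (deriv f) w) \<le> K"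
    by auto
  have "in_Hp p (deriv (\<lambda>z. deriv f (\<phi> z)))"
  proof (rule in_Hp_dominated(1)[where c=K])
    fix z :: complex assume z: "z \<in> ball 0 1"
    then have "cmod (deriv (deriv f) (\<phi> z)) \<le> K" using K(2) s(2)[OF z] by auto
    then show "cmod (deriv (\<lambda>z. deriv f (\<phi> z)) z) \<le> K * cmod (deriv \<phi> z)"
      using deriv_deriv_compose[OF f assms(2,3) z] by (simp add: norm_mult mult_right_mono)
  qed (use assms hol K in \<open>auto intro: holomorphic_deriv\<close>)
  then show ?thesis unfolding eq in_Sp_def using hol by simp
qed

lemma norm_higher_deriv_diff_le:
  assumes "f holomorphic_on S" "g holomorphic_on S" "open S" "cball \<xi> d \<subseteq> S" "0 < d"
    and bnd: "\<And>x. x \<in> sphere \<xi> d \<Longrightarrow> cmod (f x - g x) \<le> \<eta>"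
  shows "cmod ((deriv ^^ k) f \<xi> - (deriv ^^ k) g \<xi>) \<le> fact k * \<eta> / d ^ k"
proof -
  have "\<xi> \<in> S" using assms(4,5) by auto
  then have "(deriv ^^ k) f \<xi> - (deriv ^^ k) g \<xi> = (deriv ^^ k) (\<lambda>w. f w - g w) \<xi>"
    using assms(1-3) by (intro higher_deriv_diff[symmetric])
  also have "cmod \<dots> \<le> fact k * \<eta> / d ^ k"
  proof (rule Cauchy_inequality)
    have "ball \<xi> d \<subseteq> S" using assms(4) ball_subset_cball by blast
    then show "(\<lambda>w. f w - g w) holomorphic_on ball \<xi> d"
      by (intro holomorphic_intros holomorphic_on_subset[OF assms(1)] holomorphic_on_subset[OF assms(2)])
    show "continuous_on (cball \<xi> d) (\<lambda>w. f w - g w)"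
      by (intro holomorphic_on_imp_continuous_on holomorphic_intros
          holomorphic_on_subset[OF assms(1) assms(4)] holomorphic_on_subset[OF assms(2) assms(4)])
  qed (use assms in \<open>auto simp: dist_norm\<close>)
  finally show ?thesis .
qed

lemma Sp_norm_D_op_diff_le:
  assumes p: "0 < p" and hol: "\<phi> holomorphic_on ball 0 1" and maps: "\<phi> ` ball 0 1 \<subseteq> ball 0 1"
    and \<phi>': "in_Hp p (deriv \<phi>)" and s: "\<And>z. z \<in> ball 0 1 \<Longrightarrow> cmod (\<phi> z) \<le> s"
    and d: "0 < d" "s + d < 1"
    and f: "f holomorphic_on ball 0 1" and g: "g holomorphic_on ball 0 1"
    and bnd: "\<And>x. cmod x \<le> s + d \<Longrightarrow> cmod (f x - g x) \<le> \<eta>"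
  shows "Sp_norm p (\<lambda>z. D_op \<phi> f z - D_op \<phi> g z) \<le> \<eta> / d + 2 * \<eta> / d^2 * Hp_norm p (deriv \<phi>)"
proof -
  have "0 \<le> s" using order_trans[OF norm_ge_zero s[of 0]] by simp
  then have "cmod (f 0 - g 0) \<le> \<eta>" using d by (intro bnd) simp
  then have "0 \<le> \<eta>" using norm_ge_zero order_trans by blast
  have cauchy: "cmod ((deriv ^^ k) f \<xi> - (deriv ^^ k) g \<xi>) \<le> fact k * \<eta> / d ^ k"
    if "cmod \<xi> \<le> s" for k \<xi>
  proof (rule norm_higher_deriv_diff_le[OF f g open_ball _ d(1)])
    have near: "cmod x \<le> s + d" if "x \<in> cball \<xi> d" for x
      using norm_triangle_sub[of x \<xi>] that \<open>cmod \<xi> \<le> s\<close> by (simp add: dist_norm norm_minus_commute)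
    then show "cball \<xi> d \<subseteq> ball 0 1" using d(2) by fastforce
    show "\<And>x. x \<in> sphere \<xi> d \<Longrightarrow> cmod (f x - g x) \<le> \<eta>"
      using near sphere_cball by (blast intro: bnd)
  qed
  define h where "h = (\<lambda>z. deriv f (\<phi> z) - deriv g (\<phi> z))"
  have hol_comp: "(\<lambda>z. deriv k (\<phi> z)) holomorphic_on ball 0 1" if "k holomorphic_on ball 0 1" for k
    using hol maps by (intro holomorphic_deriv_compose[OF that]) auto
  have h_hol: "h holomorphic_on ball 0 1"
    unfolding h_def by (intro holomorphic_intros hol_comp f g)
  have dh: "deriv h z = (deriv (deriv f) (\<phi> z) - deriv (deriv g) (\<phi> z)) * deriv \<phi> z"
    if z: "z \<in> ball 0 1" for z
  proof -
    have "deriv h z = deriv (\<lambda>z. deriv f (\<phi> z)) z - deriv (\<lambda>z. deriv g (\<phi> z)) z"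
      unfolding h_def using hol_comp[OF f] hol_comp[OF g] z
      by (intro deriv_diff holomorphic_on_imp_differentiable_at[OF _ open_ball])
    then show ?thesis
      using deriv_deriv_compose[OF f hol maps z] deriv_deriv_compose[OF g hol maps z]
      by (simp add: algebra_simps)
  qed
  have "Hp_norm p (deriv h) \<le> 2 * \<eta> / d^2 * Hp_norm p (deriv \<phi>)"
  proof (rule in_Hp_dominated(2)[OF _ \<phi>' p])
    fix z :: complex assume z: "z \<in> ball 0 1"
    have "cmod (deriv (deriv f) (\<phi> z) - deriv (deriv g) (\<phi> z)) \<le> 2 * \<eta> / d^2"
      using cauchy[OF s[OF z], of 2] by (simp add: numeral_2_eq_2)
    then have "cmod (deriv (deriv f) (\<phi> z) - deriv (deriv g) (\<phi> z)) * cmod (deriv \<phi> z)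
        \<le> 2 * \<eta> / d^2 * cmod (deriv \<phi> z)"
      by (rule mult_right_mono) simp
    then show "cmod (deriv h z) \<le> 2 * \<eta> / d^2 * cmod (deriv \<phi> z)"
      using dh[OF z] by (simp add: norm_mult)
  qed (use h_hol \<open>0 \<le> \<eta>\<close> in \<open>auto intro: holomorphic_deriv\<close>)
  moreover have "cmod (h 0) \<le> \<eta> / d"
    using cauchy[OF s[of 0], of 1] unfolding h_def by simp
  ultimately show ?thesis by (simp add: Sp_norm_def h_def D_op_def)
qed

lemma D_op_tendsto_in_Sp:
  assumes "0 < p" "\<phi> holomorphic_on ball 0 1" "\<phi> ` ball 0 1 \<subseteq> ball 0 1" "in_Hp p (deriv \<phi>)"
    and s: "\<And>z. z \<in> ball 0 1 \<Longrightarrow> cmod (\<phi> z) \<le> s" and d: "0 < d" "s + d < 1"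
    and F: "\<And>n. F n holomorphic_on ball 0 1" and f: "f holomorphic_on ball 0 1"
    and lim: "uniform_limit (cball 0 (s + d)) F f sequentially"
  shows "(\<lambda>n. Sp_norm p (\<lambda>z. D_op \<phi> (F n) z - D_op \<phi> f z)) \<longlonglongrightarrow> 0"
  unfolding tendsto_iff
proof (intro allI impI)
  fix e :: real assume "0 < e"
  define C where "C = 1/d + 2/d^2 * Hp_norm p (deriv \<phi>)"
  have scale: "x / d + 2 * x / d^2 * Hp_norm p (deriv \<phi>) = x * C" for x
    by (simp add: C_def algebra_simps)
  have "0 < C" using d by (simp add: C_def add_pos_nonneg Hp_norm_nonneg)
  with \<open>0 < e\<close> have "eventually (\<lambda>n. \<forall>x\<in>cball 0 (s + d). dist (F n x) (f x) < e / (2*C)) sequentially"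
    using lim unfolding uniform_limit_iff by simp
  then show "eventually (\<lambda>n. dist (Sp_norm p (\<lambda>z. D_op \<phi> (F n) z - D_op \<phi> f z)) 0 < e) sequentially"
  proof (rule eventually_mono)
    fix n assume near: "\<forall>x\<in>cball 0 (s + d). dist (F n x) (f x) < e / (2*C)"
    have "Sp_norm p (\<lambda>z. D_op \<phi> (F n) z - D_op \<phi> f z)
        \<le> e / (2*C) / d + 2 * (e / (2*C)) / d^2 * Hp_norm p (deriv \<phi>)"
      using near by (intro Sp_norm_D_op_diff_le[OF assms(1-4) s d F f]) (auto simp: dist_norm less_imp_le)
    also have "\<dots> = e / (2*C) * C" by (rule scale)
    finally show "dist (Sp_norm p (\<lambda>z. D_op \<phi> (F n) z - D_op \<phi> f z)) 0 < e"
      using \<open>0 < C\<close> \<open>0 < e\<close> Sp_norm_nonneg[of p] by (simp add: dist_real_def)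
  qed
qed

section \<open>Compactness of \<open>D\<^sub>\<phi>\<close>\<close>

lemma sup_norm_lt_1_if_compact_D_op:
  assumes p: "1 \<le> p" and maps: "\<phi> ` ball 0 1 \<subseteq> ball 0 1"
    and comp: "compact_on_Sp p (D_op \<phi>)"
  shows "(SUP z\<in>ball 0 1. cmod (\<phi> z)) < 1"
proof -
  define F where "F n = (\<lambda>z::complex. z ^ Suc n / of_nat (Suc n))" for n
  have D_op_F: "D_op \<phi> (F n) = (\<lambda>z. \<phi> z ^ n)" for n
    unfolding D_op_def F_def deriv_monomial_div by (simp add: o_def)
  have F: "in_Sp p (F n)" "Sp_norm p (F n) \<le> 1" for n
    using monomial_div_in_Sp p unfolding F_def by auto
  then have "(\<forall>n. in_Sp p (F n)) \<and> bdd_above ((\<lambda>n. Sp_norm p (F n)) ` UNIV)"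
    by (auto intro: bdd_aboveI2[where M=1])
  then obtain r g where r: "strict_mono r" and "in_Sp p g"
    and "(\<lambda>n. Sp_norm p (\<lambda>z. D_op \<phi> (F (r n)) z - g z)) \<longlonglongrightarrow> 0"
    using comp unfolding compact_on_Sp_def by blast
  moreover have "in_Sp p (D_op \<phi> (F n))" for n
    using comp F(1) by (simp add: compact_on_Sp_def)
  ultimately have unif: "uniform_limit (ball 0 1) (\<lambda>n z. \<phi> z ^ r n) g sequentially"
    using p by (intro uniform_limit_if_Sp_norm_tendsto) (auto simp: D_op_F)
  have g: "g w = 0" if w: "w \<in> ball 0 1" for w
  proof (rule LIMSEQ_unique)
    show "(\<lambda>n. \<phi> w ^ r n) \<longlonglongrightarrow> g w" using tendsto_uniform_limitI[OF unif w] .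
    have "cmod (\<phi> w) < 1" using maps w by (auto simp: subset_iff)
    then show "(\<lambda>n. \<phi> w ^ r n) \<longlonglongrightarrow> 0"
      using LIMSEQ_subseq_LIMSEQ[OF LIMSEQ_power_zero r] by (simp add: o_def)
  qed
  have "eventually (\<lambda>n. \<forall>w\<in>ball 0 1. dist (\<phi> w ^ r n) (g w) < 1/2) sequentially"
    using uniform_limitD[OF unif, of "1/2"] by simp
  then obtain k where near: "\<forall>w\<in>ball 0 1. dist (\<phi> w ^ k) (g w) < 1/2"
    by (auto simp: eventually_sequentially)
  have k: "cmod (\<phi> w) ^ k < 1/2" if "w \<in> ball 0 1" for w
    using bspec[OF near that] g[OF that] by (simp add: dist_norm norm_power)
  have "0 < k" using k[of 0] by (cases k) auto
  have "cmod (\<phi> w) \<le> root k (1/2)" if "w \<in> ball 0 1" for w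
  proof -
    have "cmod (\<phi> w) = root k (cmod (\<phi> w) ^ k)" using \<open>0 < k\<close> by (simp add: real_root_pos2)
    also have "\<dots> \<le> root k (1/2)" using \<open>0 < k\<close> k[OF that] by simp
    finally show ?thesis .
  qed
  then have "(SUP z\<in>ball 0 1. cmod (\<phi> z)) \<le> root k (1/2)" by (intro cSUP_least) auto
  also have "\<dots> < 1" using \<open>0 < k\<close> by simp
  finally show ?thesis .
qed

lemma D_op_convergent_subseq:
  fixes F :: "nat \<Rightarrow> complex \<Rightarrow> complex"
  assumes p: "1 \<le> p" and hol: "\<phi> holomorphic_on ball 0 1" and maps: "\<phi> ` ball 0 1 \<subseteq> ball 0 1"
    and \<phi>': "in_Hp p (deriv \<phi>)" and s: "\<And>z. z \<in> ball 0 1 \<Longrightarrow> cmod (\<phi> z) \<le> s" "s < 1"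
    and F: "\<And>n. in_Sp p (F n)" and B: "\<And>n. Sp_norm p (F n) \<le> B"
  obtains r f where "strict_mono r" "f holomorphic_on ball 0 1"
    "(\<lambda>n. Sp_norm p (\<lambda>z. D_op \<phi> (F (r n)) z - D_op \<phi> f z)) \<longlonglongrightarrow> 0"
proof -
  have hol_F: "F n holomorphic_on ball 0 1" for n using F by (simp add: in_Sp_def)
  have bound: "cmod (F n w) \<le> 8*pi*B" if "w \<in> ball 0 1" for n w
    using norm_le_Sp_norm[OF F p that, of n] B[of n] by (smt (verit) pi_gt_zero mult_left_mono)
  obtain f r where f: "f holomorphic_on ball 0 1" and r: "strict_mono r"
    and unif: "\<And>K. compact K \<Longrightarrow> K \<subseteq> ball 0 1 \<Longrightarrow> uniform_limit K (F \<circ> r) f sequentially"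
  proof (rule Montel[of "ball 0 1" "range F" F])
    show "\<And>K. compact K \<Longrightarrow> K \<subseteq> ball 0 1 \<Longrightarrow> \<exists>B. \<forall>h\<in>range F. \<forall>z\<in>K. cmod (h z) \<le> B"
      using bound by blast
  qed (use hol_F in auto)
  define d where "d = (1 - s)/2"
  have d: "0 < d" "s + d < 1" using s(2) by (simp_all add: d_def field_simps)
  then have "uniform_limit (cball 0 (s + d)) (F \<circ> r) f sequentially"
    by (intro unif) auto
  then have "(\<lambda>n. Sp_norm p (\<lambda>z. D_op \<phi> ((F \<circ> r) n) z - D_op \<phi> f z)) \<longlonglongrightarrow> 0"
    using p hol_F by (intro D_op_tendsto_in_Sp[OF _ hol maps \<phi>' s(1) d _ f]) (auto simp: o_def)
  with r f show ?thesis by (intro that) (simp_all add: o_def)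
qed

lemma compact_D_op_if_sup_norm_lt_1:
  assumes p: "1 \<le> p" and hol: "\<phi> holomorphic_on ball 0 1" and maps: "\<phi> ` ball 0 1 \<subseteq> ball 0 1"
    and \<phi>': "in_Hp p (deriv \<phi>)" and sup: "(SUP z\<in>ball 0 1. cmod (\<phi> z)) < 1"
  shows "compact_on_Sp p (D_op \<phi>)"
proof -
  define s where "s = (SUP z\<in>ball 0 1. cmod (\<phi> z))"
  have s: "cmod (\<phi> z) \<le> s" if "z \<in> ball 0 1" for z
    unfolding s_def using maps that
    by (intro cSUP_upper bdd_aboveI2[where M=1]) (auto simp: image_subset_iff less_imp_le)
  have "s < 1" using sup by (simp add: s_def)
  have D_op_Sp: "in_Sp p (D_op \<phi> f)" if "f holomorphic_on ball 0 1" for f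
    using assms s \<open>s < 1\<close> that by (intro in_Sp_D_op[where s=s]) auto
  show ?thesis unfolding compact_on_Sp_def
  proof (intro conjI allI impI)
    fix f assume "in_Sp p f"
    then show "in_Sp p (D_op \<phi> f)" using D_op_Sp by (simp add: in_Sp_def)
  next
    fix F :: "nat \<Rightarrow> complex \<Rightarrow> complex"
    assume "(\<forall>n. in_Sp p (F n)) \<and> bdd_above ((\<lambda>n. Sp_norm p (F n)) ` UNIV)"
    then obtain B where FB: "\<And>n. in_Sp p (F n)" "\<And>n. Sp_norm p (F n) \<le> B"
      by (auto simp: bdd_above_def)
    obtain r f where "strict_mono r" "f holomorphic_on ball 0 1"
      "(\<lambda>n. Sp_norm p (\<lambda>z. D_op \<phi> (F (r n)) z - D_op \<phi> f z)) \<longlonglongrightarrow> 0"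
      by (rule D_op_convergent_subseq[OF p hol maps \<phi>' s \<open>s < 1\<close> FB])
    then show "\<exists>r g. strict_mono r \<and> in_Sp p g \<and>
        (\<lambda>n. Sp_norm p (\<lambda>z. D_op \<phi> (F (r n)) z - g z)) \<longlonglongrightarrow> 0"
      using D_op_Sp by blast
  qed
qed

theorem theorem3p6:
  fixes p :: real and \<phi> :: "complex \<Rightarrow> complex"
  assumes "p > 1"
    and "\<phi> holomorphic_on ball 0 1" and "\<phi> ` ball 0 1 \<subseteq> ball 0 1"
    and "in_Sp p \<phi>"
  shows "compact_on_Sp p (D_op \<phi>) \<longleftrightarrow> (SUP z\<in>ball 0 1. cmod (\<phi> z)) < 1"
proof -
  have p: "1 \<le> p" using assms(1) by simp
  have \<phi>': "in_Hp p (deriv \<phi>)" using assms(4) by (simp add: in_Sp_def)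
  show ?thesis
    using sup_norm_lt_1_if_compact_D_op[OF p assms(3)] compact_D_op_if_sup_norm_lt_1[OF p assms(2,3) \<phi>']
    by (rule iffI)
qed

end
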